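(* Let $\mu\in\mathbb{R}$, $c\ge 0$, $\sigma>0$, $\eta_c>0$, $\eta_s>0$. Let $u_c^*$ be the optimal value of $$\max_{p_0\in\mathbb{R},\,r\in[0,1]}\; p_0+r\mu-c-\eta_c r^2\sigma^2 \quad\text{subject to}\quad (1-r)\mu-p_0-\eta_s(1-r)^2\sigma^2\ge 0,$$ and let $u_{c,r=0}^*$ be the optimal value of the same problem with $r$ fixed to $0$ (so $u_{c,r=0}^*=\mu-c-\eta_s\sigma^2$). Then $$\Delta:=u_c^*-u_{c,r=0}^*=\sigma^2\frac{\eta_s^2}{\eta_s+\eta_c},$$ and $\Delta$ is increasing in $\sigma$, increasing in $\eta_s$, and decreasing in $\eta_c$.
   Context: Interpretation: a creator (cost $c$) sells an NFT at mint price $p_0$ with royalty rate $r$ to a speculator, who resells it to an end-buyer at the realized valuation $V$ with $\mathbb{E}[V]=\mu$, $\mathrm{Var}(V)=\sigma^2$. Creator profit is $p_0+rV-c$, speculator profit is $(1-r)V-p_0$; both agents have mean-variance utility $\mathbb{E}[\text{profit}]-\eta\,\mathrm{Var}[\text{profit}]$ with risk-aversion coefficients $\eta_c$ (creator) and $\eta_s$ (speculator). The constraint is the speculator's participation constraint. *)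

theory Defs
  imports Complex_Main
begin

definition creator_obj :: "real \<Rightarrow> real \<Rightarrow> real \<Rightarrow> real \<Rightarrow> real \<Rightarrow> real \<Rightarrow> real" where
  "creator_obj mu c sigma eta_c p0 r = p0 + r * mu - c - eta_c * r\<^sup>2 * sigma\<^sup>2"

definition spec_participates :: "real \<Rightarrow> real \<Rightarrow> real \<Rightarrow> real \<Rightarrow> real \<Rightarrow> bool" where
  "spec_participates mu sigma eta_s p0 r \<longleftrightarrow> (1 - r) * mu - p0 - eta_s * (1 - r)\<^sup>2 * sigma\<^sup>2 \<ge> 0"

definition u_star :: "real \<Rightarrow> real \<Rightarrow> real \<Rightarrow> real \<Rightarrow> real \<Rightarrow> real" where
  "u_star mu c sigma eta_s eta_c =
     Sup {creator_obj mu c sigma eta_c p0 r | p0 r. r \<in> {0..1} \<and> spec_participates mu sigma eta_s p0 r}"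

definition u_star_r0 :: "real \<Rightarrow> real \<Rightarrow> real \<Rightarrow> real \<Rightarrow> real \<Rightarrow> real" where
  "u_star_r0 mu c sigma eta_s eta_c =
     Sup {creator_obj mu c sigma eta_c p0 0 | p0. spec_participates mu sigma eta_s p0 0}"

definition royalty_gain :: "real \<Rightarrow> real \<Rightarrow> real \<Rightarrow> real \<Rightarrow> real \<Rightarrow> real" where
  "royalty_gain mu c sigma eta_s eta_c = u_star mu c sigma eta_s eta_c - u_star_r0 mu c sigma eta_s eta_c"

end

theory Submission
  imports Defs
begin

text \<open>The speculator's participation constraint binds at the optimum, so the creator's value
  at royalty rate \<open>r\<close> is \<open>\<mu> - c - \<sigma>\<^sup>2 (\<eta>\<^sub>s (1 - r)\<^sup>2 + \<eta>\<^sub>c r\<^sup>2)\<close>: the creator absorbs the total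
  risk premium of both agents. That premium is minimised by the risk-sharing rate
  \<open>r = \<eta>\<^sub>s / (\<eta>\<^sub>s + \<eta>\<^sub>c)\<close>, where it equals \<open>\<sigma>\<^sup>2 \<eta>\<^sub>s \<eta>\<^sub>c / (\<eta>\<^sub>s + \<eta>\<^sub>c)\<close>, whereas at \<open>r = 0\<close> it is
  \<open>\<sigma>\<^sup>2 \<eta>\<^sub>s\<close>.\<close>

lemma weighted_squares_identity:
  fixes a b t :: real
  shows "(a + b) * (a * (1 - t)\<^sup>2 + b * t\<^sup>2) = a * b + (a - (a + b) * t)\<^sup>2"
  by (simp add: power2_eq_square algebra_simps)

lemma weighted_squares_ge:
  fixes a b t :: real
  assumes "a + b > 0"
  shows "a * b / (a + b) \<le> a * (1 - t)\<^sup>2 + b * t\<^sup>2"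
proof -
  have "a * b \<le> (a + b) * (a * (1 - t)\<^sup>2 + b * t\<^sup>2)"
    unfolding weighted_squares_identity by simp
  with assms show ?thesis
    by (simp add: divide_le_eq mult.commute)
qed

lemma weighted_squares_at_minimizer:
  fixes a b :: real
  assumes "a + b > 0"
  shows "a * (1 - a / (a + b))\<^sup>2 + b * (a / (a + b))\<^sup>2 = a * b / (a + b)"
proof -
  have "(a + b) * (a * (1 - a / (a + b))\<^sup>2 + b * (a / (a + b))\<^sup>2) = a * b"
    using assms unfolding weighted_squares_identity by simp
  with assms show ?thesis
    by (simp add: eq_divide_eq mult.commute)
qed

lemma creator_obj_le_if_participates:
  assumes "spec_participates mu sigma eta_s p0 r"
  shows "creator_obj mu c sigma eta_c p0 r
           \<le> mu - c - sigma\<^sup>2 * (eta_s * (1 - r)\<^sup>2 + eta_c * r\<^sup>2)"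
  using assms by (simp add: creator_obj_def spec_participates_def algebra_simps)

definition binding_price :: "real \<Rightarrow> real \<Rightarrow> real \<Rightarrow> real \<Rightarrow> real" where
  "binding_price mu sigma eta_s r = (1 - r) * mu - eta_s * (1 - r)\<^sup>2 * sigma\<^sup>2"

lemma spec_participates_binding_price:
  "spec_participates mu sigma eta_s (binding_price mu sigma eta_s r) r"
  by (simp add: spec_participates_def binding_price_def)

lemma creator_obj_binding_price:
  "creator_obj mu c sigma eta_c (binding_price mu sigma eta_s r) r
     = mu - c - sigma\<^sup>2 * (eta_s * (1 - r)\<^sup>2 + eta_c * r\<^sup>2)"
  by (simp add: creator_obj_def binding_price_def algebra_simps)

lemma u_star_eq:
  assumes "eta_s > 0" "eta_c > 0"
  shows "u_star mu c sigma eta_s eta_c = mu - c - sigma\<^sup>2 * (eta_s * eta_c / (eta_s + eta_c))"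
  unfolding u_star_def
proof (rule cSup_eq_maximum)
  define r where "r = eta_s / (eta_s + eta_c)"
  have "r \<in> {0..1}"
    using assms by (simp add: r_def)
  moreover have "creator_obj mu c sigma eta_c (binding_price mu sigma eta_s r) r
      = mu - c - sigma\<^sup>2 * (eta_s * eta_c / (eta_s + eta_c))"
    using assms unfolding creator_obj_binding_price r_def
    by (simp add: weighted_squares_at_minimizer)
  ultimately show "mu - c - sigma\<^sup>2 * (eta_s * eta_c / (eta_s + eta_c))
      \<in> {creator_obj mu c sigma eta_c p0 r | p0 r. r \<in> {0..1} \<and> spec_participates mu sigma eta_s p0 r}"
    using spec_participates_binding_price by (metis (mono_tags, lifting) mem_Collect_eq)
next
  fix x
  assume "x \<in> {creator_obj mu c sigma eta_c p0 r | p0 r. r \<in> {0..1} \<and> spec_participates mu sigma eta_s p0 r}"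
  then obtain p0 r where x: "x = creator_obj mu c sigma eta_c p0 r"
    and participates: "spec_participates mu sigma eta_s p0 r"
    by blast
  have "x \<le> mu - c - sigma\<^sup>2 * (eta_s * (1 - r)\<^sup>2 + eta_c * r\<^sup>2)"
    unfolding x using participates by (rule creator_obj_le_if_participates)
  also have "\<dots> \<le> mu - c - sigma\<^sup>2 * (eta_s * eta_c / (eta_s + eta_c))"
    using assms by (intro diff_left_mono mult_left_mono weighted_squares_ge) auto
  finally show "x \<le> mu - c - sigma\<^sup>2 * (eta_s * eta_c / (eta_s + eta_c))" .
qed

lemma u_star_r0_eq: "u_star_r0 mu c sigma eta_s eta_c = mu - c - sigma\<^sup>2 * eta_s"
  unfolding u_star_r0_def
proof (rule cSup_eq_maximum)
  have "creator_obj mu c sigma eta_c (binding_price mu sigma eta_s 0) 0 = mu - c - sigma\<^sup>2 * eta_s"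
    by (simp add: creator_obj_binding_price)
  then show "mu - c - sigma\<^sup>2 * eta_s
      \<in> {creator_obj mu c sigma eta_c p0 0 | p0. spec_participates mu sigma eta_s p0 0}"
    using spec_participates_binding_price by (metis (mono_tags, lifting) mem_Collect_eq)
next
  fix x
  assume "x \<in> {creator_obj mu c sigma eta_c p0 0 | p0. spec_participates mu sigma eta_s p0 0}"
  then show "x \<le> mu - c - sigma\<^sup>2 * eta_s"
    using creator_obj_le_if_participates[where r = 0] by auto
qed

lemma royalty_gain_eq:
  assumes "eta_s > 0" "eta_c > 0"
  shows "royalty_gain mu c sigma eta_s eta_c = sigma\<^sup>2 * (eta_s\<^sup>2 / (eta_s + eta_c))"
  using assms unfolding royalty_gain_def u_star_eq[OF assms] u_star_r0_eq
  by (simp add: field_simps power2_eq_square)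

lemma square_div_add_strict_mono:
  fixes x y b :: real
  assumes "0 < x" "x < y" "b \<ge> 0"
  shows "x\<^sup>2 / (x + b) < y\<^sup>2 / (y + b)"
proof -
  have "0 < (y - x) * (x * y + b * (x + y))"
    using assms by (intro mult_pos_pos add_pos_nonneg) auto
  also have "\<dots> = y\<^sup>2 * (x + b) - x\<^sup>2 * (y + b)"
    by (simp add: power2_eq_square algebra_simps)
  finally have "x\<^sup>2 * (y + b) < y\<^sup>2 * (x + b)"
    by simp
  with assms show ?thesis
    by (simp add: divide_less_eq less_divide_eq mult.commute)
qed

theorem theorem2:
  fixes mu c sigma eta_s eta_c :: real
  assumes "c \<ge> 0" "sigma > 0" "eta_c > 0" "eta_s > 0"
  shows "royalty_gain mu c sigma eta_s eta_c = sigma\<^sup>2 * (eta_s\<^sup>2 / (eta_s + eta_c))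
    \<and> (\<forall>s1 s2. 0 < s1 \<and> s1 < s2 \<longrightarrow>
           royalty_gain mu c s1 eta_s eta_c < royalty_gain mu c s2 eta_s eta_c)
    \<and> (\<forall>e1 e2. 0 < e1 \<and> e1 < e2 \<longrightarrow>
           royalty_gain mu c sigma e1 eta_c < royalty_gain mu c sigma e2 eta_c)
    \<and> (\<forall>e1 e2. 0 < e1 \<and> e1 < e2 \<longrightarrow>
           royalty_gain mu c sigma eta_s e2 < royalty_gain mu c sigma eta_s e1)"
proof (intro conjI allI impI)
  show "royalty_gain mu c sigma eta_s eta_c = sigma\<^sup>2 * (eta_s\<^sup>2 / (eta_s + eta_c))"
    using assms(4,3) by (rule royalty_gain_eq)
next
  fix s1 s2 :: real
  assume "0 < s1 \<and> s1 < s2"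
  then show "royalty_gain mu c s1 eta_s eta_c < royalty_gain mu c s2 eta_s eta_c"
    using assms unfolding royalty_gain_eq[OF assms(4,3)]
    by (intro mult_strict_right_mono power_strict_mono) auto
next
  fix e1 e2 :: real
  assume e: "0 < e1 \<and> e1 < e2"
  then have "0 < e1" "0 < e2"
    by auto
  with e show "royalty_gain mu c sigma e1 eta_c < royalty_gain mu c sigma e2 eta_c"
    using assms unfolding royalty_gain_eq[OF \<open>0 < e1\<close> assms(3)] royalty_gain_eq[OF \<open>0 < e2\<close> assms(3)]
    by (intro mult_strict_left_mono square_div_add_strict_mono) auto
next
  fix e1 e2 :: real
  assume e: "0 < e1 \<and> e1 < e2"
  then have "0 < e1" "0 < e2"
    by auto
  with e show "royalty_gain mu c sigma eta_s e2 < royalty_gain mu c sigma eta_s e1"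
    using assms unfolding royalty_gain_eq[OF assms(4) \<open>0 < e1\<close>] royalty_gain_eq[OF assms(4) \<open>0 < e2\<close>]
    by (intro mult_strict_left_mono divide_strict_left_mono) auto
qed

end
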